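(* In the setting below, assume $Z$ is monotone on $[0,x_+]$, the initial data is the step $p_0(\xi)=1$ for $\xi\le0$ and $p_0(\xi)=0$ for $\xi>0$, and $e^{-\pi}<Z_+/Z_-<e^{\pi}$. Then $$\sum_{m=0}^\infty T_{2m}^\infty=\frac{2Z_+}{Z_-+Z_+}=C_G\,\operatorname{sech}(\log C_G),\qquad \sum_{m=0}^\infty R_{2m+1}^\infty=\frac{Z_+-Z_-}{Z_-+Z_+}=\tanh(\log C_G),$$ where $T_{2m}^\infty=\lim_{t\to\infty}T_{2m}(t)$ and $R_{2m+1}^\infty=\lim_{t\to\infty}R_{2m+1}(t)$. Both series converge.
   Context: Setting. Fix $x_+>0$. Let $K,\rho:\mathbb R\to(0,\infty)$ be continuous. On $(-\infty,0)$ they are constant, $(K,\rho)=(K_-,\rho_-)$; on $(x_+,\infty)$ they are constant, $(K,\rho)=(K_+,\rho_+)$; and on $[0,x_+]$ they are continuously differentiable. Define $Z=\sqrt{K\rho}$ and $c=\sqrt{K/\rho}$, with constant values $Z_\pm$, $c_\pm$ outside $[0,x_+]$. Let $r(x)=Z'(x)/(2Z(x))$ on $[0,x_+]$, $\tau(x)=\int_0^x ds/c(s)$, $t_+=\tau(x_+)$, and $C_G=\sqrt{Z_+/Z_-}$. A sequence $\mathbf x=(x_1,\dots,x_n)$ is alternating if $x_1\ge x_2\le x_3\ge\cdots$, that is, $x_j\le x_{j-1}$ for even $j\ge2$ and $x_j\ge x_{j-1}$ for odd $j\ge3$. Let $\mathcal P_n^{[0,x_+]}$ be the set of alternating $\mathbf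 x\in[0,x_+]^n$, and put $\hat t(\mathbf x)=2\sum_{j=1}^n(-1)^{j+1}\tau(x_j)$. Define $$\xi_R(\mathbf x,x,t)=-c_-(t-\hat t(\mathbf x)+\tau(x)),\qquad \xi_T(\mathbf x,x,t)=-c_-(t-\hat t(\mathbf x)-\tau(x)).$$ For $m\ge0$ define $$R_{2m+1}(t)=(-1)^m\int_{\mathcal P_{2m+1}^{[0,x_+]}}p_0(\xi_R(\mathbf x,0,t))\prod_{j=1}^{2m+1}r(x_j)\,d\mathbf x,$$ $$T_{2m}(t)=(-1)^mC_G\int_{\mathcal P_{2m}^{[0,x_+]}}p_0(\xi_T(\mathbf x,x_+,t))\prod_{j=1}^{2m}r(x_j)\,d\mathbf x,$$ with $T_0(t)=C_G\,p_0(-c_-(t-t_+))$. *)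

theory Defs
  imports "HOL-Analysis.Analysis"
begin

text \<open>Sequences (x_1,...,x_n) are represented as extensional functions nat => real
  on the index set {1..n}; the measure on R^n is the product of Lebesgue-Borel measures.\<close>

definition alternating :: "nat \<Rightarrow> (nat \<Rightarrow> real) \<Rightarrow> bool" where
  "alternating n x \<longleftrightarrow>
     (\<forall>j\<in>{2..n}. (even j \<longrightarrow> x j \<le> x (j - 1)) \<and> (odd j \<longrightarrow> x (j - 1) \<le> x j))"

definition altset :: "nat \<Rightarrow> real \<Rightarrow> (nat \<Rightarrow> real) set" where
  "altset n a = {x \<in> PiE {1..n} (\<lambda>_. {0..a}). alternating n x}"

definition tau :: "(real \<Rightarrow> real) \<Rightarrow> real \<Rightarrow> real" where
  "tau c x = integral {0..x} (\<lambda>s. 1 / c s)"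

definition that :: "(real \<Rightarrow> real) \<Rightarrow> nat \<Rightarrow> (nat \<Rightarrow> real) \<Rightarrow> real" where
  "that \<tau> n x = 2 * (\<Sum>j=1..n. (-1) ^ (j + 1) * \<tau> (x j))"

definition xiR :: "real \<Rightarrow> (real \<Rightarrow> real) \<Rightarrow> nat \<Rightarrow> (nat \<Rightarrow> real) \<Rightarrow> real \<Rightarrow> real \<Rightarrow> real" where
  "xiR cm \<tau> n x y t = - cm * (t - that \<tau> n x + \<tau> y)"

definition xiT :: "real \<Rightarrow> (real \<Rightarrow> real) \<Rightarrow> nat \<Rightarrow> (nat \<Rightarrow> real) \<Rightarrow> real \<Rightarrow> real \<Rightarrow> real" where
  "xiT cm \<tau> n x y t = - cm * (t - that \<tau> n x - \<tau> y)"

definition Rcoef :: "(real \<Rightarrow> real) \<Rightarrow> real \<Rightarrow> (real \<Rightarrow> real) \<Rightarrow> (real \<Rightarrow> real)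
    \<Rightarrow> real \<Rightarrow> nat \<Rightarrow> real \<Rightarrow> real" where
  "Rcoef p0 cm \<tau> r xp m t =
     (-1) ^ m * (LINT x : altset (2 * m + 1) xp | PiM {1..2 * m + 1} (\<lambda>_. lborel).
        p0 (xiR cm \<tau> (2 * m + 1) x 0 t) * (\<Prod>j=1..2 * m + 1. r (x j)))"

definition Tcoef :: "(real \<Rightarrow> real) \<Rightarrow> real \<Rightarrow> real \<Rightarrow> (real \<Rightarrow> real) \<Rightarrow> (real \<Rightarrow> real)
    \<Rightarrow> real \<Rightarrow> nat \<Rightarrow> real \<Rightarrow> real" where
  "Tcoef p0 cm CG \<tau> r xp m t =
     (if m = 0 then CG * p0 (- cm * (t - \<tau> xp))
      else (-1) ^ m * CG * (LINT x : altset (2 * m) xp | PiM {1..2 * m} (\<lambda>_. lborel).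
        p0 (xiT cm \<tau> (2 * m) x xp t) * (\<Prod>j=1..2 * m. r (x j))))"

end

theory Submission
  imports Defs
begin

text \<open>After the time exceeds every travel time, the step data contribute \<open>1\<close> on the whole
  integration domain, so \<open>T\<^sub>2\<^sub>m\<close> and \<open>R\<^sub>2\<^sub>m\<^sub>+\<^sub>1\<close> become constant: up to a
  sign, they are iterated integrals of \<open>q = |Z'| / (2Z)\<close> over alternating sequences.
  Integrating out the last coordinate expresses them as "ladder" functions \<open>G\<^sub>n\<close> with
  \<open>G\<^sub>n\<^sub>+\<^sub>1' = \<mp> q G\<^sub>n\<close>. The alternating partial sums then solve the linear system
  \<open>A' = -q B\<close>, \<open>B' = -q A\<close> up to the first omitted term, whose exact solution is given by
  \<open>cosh\<close> and \<open>sinh\<close> of \<open>L - \<integral>\<^sub>0\<^sup>y q\<close>, with \<open>L = \<integral> q = |log C\<^sub>G|\<close>. The omitted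
  terms tend to zero because the non-alternating sums are dominated by the corresponding
  trigonometric solution, which stays finite exactly when \<open>L < \<pi>/2\<close>, i.e.
  \<open>e\<^sup>-\<^sup>\<pi> < Z\<^sub>+/Z\<^sub>- < e\<^sup>\<pi>\<close>. Evaluating at the endpoints gives \<open>sech L\<close> and \<open>tanh L\<close>.\<close>

section \<open>Alternating sets and ladder integrals\<close>

definition altset_prefix :: "nat \<Rightarrow> real \<Rightarrow> real \<Rightarrow> (nat \<Rightarrow> real) set" where
  "altset_prefix n a y = {x \<in> PiE {1..n} (\<lambda>_. {0..a}). alternating (Suc n) (x(Suc n := y))}"

text \<open>Unlike \<open>x j\<close>, the coordinate with a default value is measurable on \<open>PiM I\<close> for every \<open>j\<close>,
  so that the measurability method can handle conditions on \<open>x (j - 1)\<close> and \<open>x (Suc n)\<close>.\<close>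
definition coord_or :: "nat set \<Rightarrow> real \<Rightarrow> nat \<Rightarrow> (nat \<Rightarrow> real) \<Rightarrow> real" where
  "coord_or I c j x = (if j \<in> I then x j else c)"

lemma measurable_coord_or[measurable]:
  "coord_or I c j \<in> borel_measurable (PiM I (\<lambda>_. lborel::real measure))"
  "coord_or I c j \<in> borel_measurable (PiM I (\<lambda>_. borel::real measure))"
  unfolding coord_or_def by (cases "j \<in> I"; simp)+

lemma pred_coord_or_le[measurable]:
  "Measurable.pred (PiM I (\<lambda>_. lborel::real measure)) (\<lambda>x. coord_or I c j x \<le> coord_or I c' k x)"
  "Measurable.pred (PiM I (\<lambda>_. borel::real measure)) (\<lambda>x. coord_or I c j x \<le> coord_or I c' k x)"
  unfolding pred_def by (rule borel_measurable_le; rule measurable_coord_or)+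

lemma alternating_cong:
  assumes "\<And>j. j \<le> n \<Longrightarrow> f j = g j"
  shows "alternating n f = alternating n g"
  unfolding alternating_def using assms by (intro ball_cong) auto

lemma alternating_Suc:
  "alternating (Suc n) f \<longleftrightarrow> alternating n f \<and>
     (n \<ge> 1 \<longrightarrow> (even (Suc n) \<longrightarrow> f (Suc n) \<le> f n) \<and> (odd (Suc n) \<longrightarrow> f n \<le> f (Suc n)))"
proof (cases "n = 0")
  case False
  then have "{2..Suc n} = insert (Suc n) {2..n}" by auto
  with False show ?thesis unfolding alternating_def by auto
qed (simp add: alternating_def)

lemma altset_prefix_eq:
  "altset_prefix n a y = {x \<in> space (PiM {1..n} (\<lambda>_. lborel::real measure)).
     (\<forall>j\<in>{1..n}. 0 \<le> x j \<and> x j \<le> a) \<and>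
     (\<forall>j\<in>{2..Suc n}. (even j \<longrightarrow> coord_or {1..n} y j x \<le> coord_or {1..n} y (j - 1) x)
        \<and> (odd j \<longrightarrow> coord_or {1..n} y (j - 1) x \<le> coord_or {1..n} y j x))}"
proof -
  have "alternating (Suc n) (x(Suc n := y)) \<longleftrightarrow>
      (\<forall>j\<in>{2..Suc n}. (even j \<longrightarrow> coord_or {1..n} y j x \<le> coord_or {1..n} y (j - 1) x)
        \<and> (odd j \<longrightarrow> coord_or {1..n} y (j - 1) x \<le> coord_or {1..n} y j x))" for x
    unfolding alternating_def
  proof (intro ball_cong refl)
    fix j assume "j \<in> {2..Suc n}"
    then have "coord_or {1..n} y j x = (x(Suc n := y)) j"
      and "coord_or {1..n} y (j - 1) x = (x(Suc n := y)) (j - 1)"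
      by (auto simp: coord_or_def)
    then show "((even j \<longrightarrow> (x(Suc n := y)) j \<le> (x(Suc n := y)) (j - 1))
        \<and> (odd j \<longrightarrow> (x(Suc n := y)) (j - 1) \<le> (x(Suc n := y)) j)) =
      ((even j \<longrightarrow> coord_or {1..n} y j x \<le> coord_or {1..n} y (j - 1) x)
        \<and> (odd j \<longrightarrow> coord_or {1..n} y (j - 1) x \<le> coord_or {1..n} y j x))"
      by simp
  qed
  then show ?thesis
    unfolding altset_prefix_def space_PiM by (auto simp: PiE_iff)
qed

lemma sets_altset_prefix[measurable]:
  "altset_prefix n a y \<in> sets (PiM {1..n} (\<lambda>_. lborel::real measure))"
  unfolding altset_prefix_eq by measurable

text \<open>Appending \<open>0\<close> after an odd, or \<open>a\<close> after an even number of points never breaks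
  alternation.\<close>
lemma altset_eq_altset_prefix:
  assumes "a \<ge> 0"
  shows "altset n a = altset_prefix n a (if odd n then 0 else a)"
proof -
  have "alternating (Suc n) (x(Suc n := if odd n then 0 else a)) \<longleftrightarrow> alternating n x"
    if "x \<in> PiE {1..n} (\<lambda>_. {0..a})" for x
  proof -
    have "n \<ge> 1 \<Longrightarrow> x n \<in> {0..a}" using that by auto
    then show ?thesis
      by (subst alternating_Suc, subst alternating_cong[where g = x]) (auto simp: assms)
  qed
  then show ?thesis unfolding altset_def altset_prefix_def by auto
qed

text \<open>\<open>ladder r a n y\<close> is the integral of \<open>\<Prod> r (x j)\<close> over \<open>altset_prefix n a y\<close>;
  the recursion integrates out the last coordinate, which ranges over \<open>[y, a]\<close> or \<open>[0, y]\<close>.\<close>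
fun ladder :: "(real \<Rightarrow> real) \<Rightarrow> real \<Rightarrow> nat \<Rightarrow> real \<Rightarrow> real" where
  "ladder r a 0 y = 1"
| "ladder r a (Suc n) y = integral (if even n then {y..a} else {0..y}) (\<lambda>z. r z * ladder r a n z)"

declare ladder.simps(2)[simp del]

lemma integral_complement_left:
  fixes f :: "real \<Rightarrow> real"
  assumes "f integrable_on {0..a}" "y \<in> {0..a}"
  shows "integral {y..a} f = integral {0..a} f - integral {0..y} f"
  using Henstock_Kurzweil_Integration.integral_combine[where a = 0 and c = y and b = a and f = f] assms by auto

lemma ladder_Suc_even:
  assumes "(\<lambda>z. r z * ladder r a n z) integrable_on {0..a}" "even n" "y \<in> {0..a}"
  shows "ladder r a (Suc n) y =
           integral {0..a} (\<lambda>z. r z * ladder r a n z) - integral {0..y} (\<lambda>z. r z * ladder r a n z)"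
  using integral_complement_left[OF assms(1,3)] assms(2) by (simp add: ladder.simps)

lemma ladder_Suc_odd:
  "odd n \<Longrightarrow> ladder r a (Suc n) = (\<lambda>y. integral {0..y} (\<lambda>z. r z * ladder r a n z))"
  by (simp add: fun_eq_iff ladder.simps)

lemma continuous_on_ladder:
  assumes "continuous_on UNIV r"
  shows "continuous_on {0..a} (ladder r a n)"
proof (induction n)
  case (Suc n)
  let ?f = "\<lambda>z. r z * ladder r a n z"
  have int: "?f integrable_on {0..a}"
    using continuous_on_subset[OF assms] Suc.IH
    by (intro integrable_continuous_interval continuous_on_mult) auto
  have cont: "continuous_on {0..a} (\<lambda>y. integral {0..y} ?f)"
    by (rule indefinite_integral_continuous_1[OF int])
  show ?case
  proof (cases "even n")
    case True
    have "continuous_on {0..a} (\<lambda>y. integral {0..a} ?f - integral {0..y} ?f)"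
      by (intro continuous_on_diff continuous_on_const cont)
    then show ?thesis
      by (rule continuous_on_eq) (simp add: ladder_Suc_even[OF int True])
  qed (use cont in \<open>simp add: ladder_Suc_odd\<close>)
qed simp

lemma integrable_ladder_step:
  assumes "continuous_on UNIV r"
  shows "(\<lambda>z. r z * ladder r a n z) integrable_on {0..a}"
  using continuous_on_subset[OF assms] continuous_on_ladder[OF assms]
  by (intro integrable_continuous_interval continuous_on_mult) auto

lemma has_integral_ladder:
  assumes "continuous_on UNIV r" "y \<in> {0..a}"
  shows "((\<lambda>z. r z * ladder r a n z) has_integral ladder r a (Suc n) y)
           (if even n then {y..a} else {0..y})"
proof -
  have "(\<lambda>z. r z * ladder r a n z) integrable_on (if even n then {y..a} else {0..y})"
    using integrable_subinterval_real[OF integrable_ladder_step[OF assms(1)]] assms(2)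
    by (cases "even n") auto
  then show ?thesis by (simp add: ladder.simps integrable_integral)
qed

lemma ladder_nonneg:
  assumes "continuous_on UNIV r" "\<And>z. r z \<ge> 0" "y \<in> {0..a}"
  shows "ladder r a n y \<ge> 0"
  using assms(3)
proof (induction n arbitrary: y)
  case (Suc n)
  have "z \<in> (if even n then {y..a} else {0..y}) \<Longrightarrow> z \<in> {0..a}" for z
    using Suc.prems by (auto split: if_splits)
  then show ?case
    by (intro has_integral_nonneg[OF has_integral_ladder[OF assms(1) Suc.prems]]
        mult_nonneg_nonneg assms(2) Suc.IH)
qed simp

lemma has_real_derivative_ladder:
  assumes "continuous_on UNIV r" "y \<in> {0..a}"
  shows "(ladder r a (Suc n) has_real_derivative
           (if even n then - (r y * ladder r a n y) else r y * ladder r a n y)) (at y within {0..a})"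
proof -
  let ?f = "\<lambda>z. r z * ladder r a n z"
  have int: "?f integrable_on {0..a}" by (rule integrable_ladder_step[OF assms(1)])
  have deriv: "((\<lambda>u. integral {0..u} ?f) has_real_derivative ?f y) (at y within {0..a})"
    unfolding has_real_derivative_iff_has_vector_derivative
    using continuous_on_subset[OF assms(1)] continuous_on_ladder[OF assms(1)] assms(2)
    by (intro integral_has_vector_derivative continuous_on_mult) auto
  show ?thesis
  proof (cases "even n")
    case True
    have "((\<lambda>u. integral {0..a} ?f - integral {0..u} ?f) has_real_derivative - ?f y)
        (at y within {0..a})"
      using DERIV_diff[OF DERIV_const deriv] by simp
    then have "(ladder r a (Suc n) has_real_derivative - ?f y) (at y within {0..a})"
      by (rule has_field_derivative_transform_within[OF _ zero_less_one assms(2)])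
        (simp add: ladder_Suc_even[OF int True])
    then show ?thesis using True by simp
  qed (use deriv in \<open>simp add: ladder_Suc_odd\<close>)
qed

lemma indicator_altset_prefix_Suc:
  assumes x: "x \<in> space (PiM {1..n} (\<lambda>_. lborel::real measure))" and y: "y \<in> {0..a}"
  shows "indicator (altset_prefix (Suc n) a y) (x(Suc n := z)) =
     (indicator (if even n then {y..a} else {0..y}) z * indicator (altset_prefix n a z) x :: real)"
proof -
  have "x \<in> extensional {1..n}" using x by (simp add: space_PiM PiE_def)
  then have box: "x(Suc n := z) \<in> PiE {1..Suc n} (\<lambda>_. {0..a}) \<longleftrightarrow>
      x \<in> PiE {1..n} (\<lambda>_. {0..a}) \<and> z \<in> {0..a}"
    by (auto simp: PiE_def Pi_def extensional_def)
  have alt: "alternating (Suc (Suc n)) (x(Suc n := z, Suc (Suc n) := y)) \<longleftrightarrow>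
      alternating (Suc n) (x(Suc n := z)) \<and> (even n \<longrightarrow> y \<le> z) \<and> (odd n \<longrightarrow> z \<le> y)"
    by (subst alternating_Suc, subst alternating_cong[where g = "x(Suc n := z)"]) auto
  have "x(Suc n := z) \<in> altset_prefix (Suc n) a y \<longleftrightarrow>
      z \<in> (if even n then {y..a} else {0..y}) \<and> x \<in> altset_prefix n a z"
    unfolding altset_prefix_def using box alt y by (auto simp: fun_upd_twist)
  then show ?thesis by (auto simp: indicator_def)
qed

lemma nn_integral_altset_prefix_Suc:
  assumes r[measurable]: "r \<in> borel_measurable borel" and r_nonneg: "\<And>z. r z \<ge> 0"
    and y: "y \<in> {0..a}"
  shows "(\<integral>\<^sup>+x. ennreal (indicator (altset_prefix (Suc n) a y) x * (\<Prod>j\<in>{1..Suc n}. r (x j)))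
            \<partial>PiM {1..Suc n} (\<lambda>_. lborel))
       = (\<integral>\<^sup>+z. ennreal (indicator (if even n then {y..a} else {0..y}) z * r z) *
            (\<integral>\<^sup>+x. ennreal (indicator (altset_prefix n a z) x * (\<Prod>j\<in>{1..n}. r (x j)))
              \<partial>PiM {1..n} (\<lambda>_. lborel)) \<partial>lborel)"
    (is "_ = (\<integral>\<^sup>+z. ennreal (indicator ?J z * r z) * ?I z \<partial>lborel)")
proof -
  interpret product_sigma_finite "\<lambda>_. lborel::real measure" by standard
  let ?F = "\<lambda>n y x. ennreal (indicator (altset_prefix n a y) x * (\<Prod>j\<in>{1..n}. r (x j)))"
  have insert: "{1..Suc n} = insert (Suc n) {1..n}" by auto
  have "(\<lambda>x. ?F (Suc n) y x) \<in> borel_measurable (PiM {1..Suc n} (\<lambda>_. lborel))"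
    by measurable
  then have "(\<integral>\<^sup>+x. ?F (Suc n) y x \<partial>PiM {1..Suc n} (\<lambda>_. lborel))
      = (\<integral>\<^sup>+z. (\<integral>\<^sup>+x. ?F (Suc n) y (x(Suc n := z)) \<partial>PiM {1..n} (\<lambda>_. lborel)) \<partial>lborel)"
    unfolding insert by (intro product_nn_integral_insert_rev) auto
  also have "\<dots> = (\<integral>\<^sup>+z. (\<integral>\<^sup>+x. ennreal (indicator ?J z * r z) * ?F n z x \<partial>PiM {1..n} (\<lambda>_. lborel)) \<partial>lborel)"
  proof (intro nn_integral_cong)
    fix z x assume x: "x \<in> space (PiM {1..n} (\<lambda>_. lborel::real measure))"
    have "(\<Prod>j\<in>{1..Suc n}. r ((x(Suc n := z)) j)) = r z * (\<Prod>j\<in>{1..n}. r (x j))"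
      unfolding insert by (simp add: prod.insert)
    then show "?F (Suc n) y (x(Suc n := z)) = ennreal (indicator ?J z * r z) * ?F n z x"
      unfolding indicator_altset_prefix_Suc[OF x y]
      by (subst ennreal_mult[symmetric]) (auto intro!: mult_nonneg_nonneg prod_nonneg r_nonneg simp: mult_ac)
  qed
  also have "\<dots> = (\<integral>\<^sup>+z. ennreal (indicator ?J z * r z) * ?I z \<partial>lborel)"
    by (intro nn_integral_cong nn_integral_cmult) measurable
  finally show ?thesis .
qed

lemma nn_integral_altset_prefix:
  assumes r: "continuous_on UNIV r" and r_nonneg: "\<And>z. r z \<ge> 0" and y: "y \<in> {0..a}"
  shows "(\<integral>\<^sup>+x. ennreal (indicator (altset_prefix n a y) x * (\<Prod>j\<in>{1..n}. r (x j)))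
            \<partial>PiM {1..n} (\<lambda>_. lborel)) = ennreal (ladder r a n y)"
  using y
proof (induction n arbitrary: y)
  case 0
  then show ?case
    by (simp add: PiM_empty nn_integral_count_space_finite altset_prefix_def alternating_def)
next
  case (Suc n)
  let ?J = "if even n then {y..a} else {0..y}"
  have J: "z \<in> ?J \<Longrightarrow> z \<in> {0..a}" for z using Suc.prems by (auto split: if_splits)
  have r_measurable: "r \<in> borel_measurable borel"
    using r by (simp add: borel_measurable_continuous_onI)
  have "(\<integral>\<^sup>+x. ennreal (indicator (altset_prefix (Suc n) a y) x * (\<Prod>j\<in>{1..Suc n}. r (x j)))
        \<partial>PiM {1..Suc n} (\<lambda>_. lborel))
      = (\<integral>\<^sup>+z. ennreal (indicator ?J z * (r z * ladder r a n z)) \<partial>lborel)"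
    unfolding nn_integral_altset_prefix_Suc[OF r_measurable r_nonneg Suc.prems]
  proof (intro nn_integral_cong)
    fix z :: real
    show "ennreal (indicator ?J z * r z) *
        (\<integral>\<^sup>+x. ennreal (indicator (altset_prefix n a z) x * (\<Prod>j\<in>{1..n}. r (x j))) \<partial>PiM {1..n} (\<lambda>_. lborel)) =
        ennreal (indicator ?J z * (r z * ladder r a n z))"
    proof (cases "z \<in> ?J")
      case True
      then show ?thesis
        using Suc.IH[OF J[OF True]] ladder_nonneg[OF r r_nonneg J[OF True]] r_nonneg[of z]
        by (simp add: ennreal_mult[symmetric])
    qed simp
  qed
  also have "\<dots> = ennreal (ladder r a (Suc n) y)"
  proof (rule nn_integral_has_integral_lebesgue)
    show "((\<lambda>z. r z * ladder r a n z) has_integral ladder r a (Suc n) y) ?J"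
      by (rule has_integral_ladder[OF r Suc.prems])
  qed (use J in \<open>intro mult_nonneg_nonneg r_nonneg ladder_nonneg[OF r r_nonneg]\<close>)
  finally show ?case .
qed

lemma set_integral_altset_prod:
  assumes r: "continuous_on UNIV r" and r_nonneg: "\<And>z. r z \<ge> 0" and a: "a \<ge> 0"
  shows "(LINT x : altset n a | PiM {1..n} (\<lambda>_. lborel). (\<Prod>j=1..n. r (x j)))
           = ladder r a n (if odd n then 0 else a)"
proof -
  have [measurable]: "r \<in> borel_measurable borel"
    using r by (simp add: borel_measurable_continuous_onI)
  define y where "y = (if odd n then 0 else a)"
  have y: "y \<in> {0..a}" using a by (auto simp: y_def)
  have meas: "(\<lambda>x. indicator (altset_prefix n a y) x * (\<Prod>j\<in>{1..n}. r (x j)))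
      \<in> borel_measurable (PiM {1..n} (\<lambda>_. lborel))"
    by measurable
  have "(LINT x : altset n a | PiM {1..n} (\<lambda>_. lborel). (\<Prod>j=1..n. r (x j)))
      = integral\<^sup>L (PiM {1..n} (\<lambda>_. lborel))
          (\<lambda>x. indicator (altset_prefix n a y) x * (\<Prod>j\<in>{1..n}. r (x j)))"
    unfolding set_lebesgue_integral_def altset_eq_altset_prefix[OF a] y_def by simp
  also have "\<dots> = enn2real (ladder r a n y)"
    using nn_integral_altset_prefix[OF r r_nonneg y]
    by (subst integral_eq_nn_integral[OF meas]) (auto intro!: mult_nonneg_nonneg prod_nonneg r_nonneg)
  finally show ?thesis using ladder_nonneg[OF r r_nonneg y] by (simp add: y_def)
qed

section \<open>Alternating sums of ladder integrals\<close>

lemma has_integral_of_derivative_within: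
  fixes f f' :: "real \<Rightarrow> real"
  assumes "\<And>y. y \<in> {c..d} \<Longrightarrow> (f has_real_derivative f' y) (at y within {c..d})"
    and "u \<le> v" "{u..v} \<subseteq> {c..d}"
  shows "(f' has_integral (f v - f u)) {u..v}"
proof (rule fundamental_theorem_of_calculus[OF assms(2)])
  fix x assume "x \<in> {u..v}"
  with assms(1,3) have "(f has_real_derivative f' x) (at x within {c..d})" by auto
  then have "(f has_real_derivative f' x) (at x within {u..v})"
    by (rule DERIV_subset) (use assms(3) in auto)
  then show "(f has_vector_derivative f' x) (at x within {u..v})"
    by (simp add: has_real_derivative_iff_has_vector_derivative)
qed

lemma cosh_mult_one_minus_tanh_sq: "cosh x * (1 - tanh x * tanh x) = 1 / cosh (x :: real)"
proof -
  have "cosh x * (1 - tanh x * tanh x) = (cosh x ^ 2 - sinh x ^ 2) / cosh x"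
    by (simp add: tanh_def field_simps power2_eq_square)
  then show ?thesis by (simp add: cosh_square_eq)
qed

context
  fixes q :: "real \<Rightarrow> real" and a L :: real
  assumes q_cont: "continuous_on UNIV q" and q_nonneg: "\<And>z. q z \<ge> 0" and a_pos: "a > 0"
    and L_eq: "L = integral {0..a} q"
begin

definition cumul :: "real \<Rightarrow> real" where
  "cumul y = integral {0..y} q"

lemma has_real_derivative_cumul:
  "y \<in> {0..a} \<Longrightarrow> (cumul has_real_derivative q y) (at y within {0..a})"
  unfolding cumul_def has_real_derivative_iff_has_vector_derivative
  by (rule integral_has_vector_derivative[OF continuous_on_subset[OF q_cont]]) auto

lemma cumul_bounds:
  assumes "y \<in> {0..a}"
  shows "0 \<le> cumul y" "cumul y \<le> L"
proof -
  have q: "q integrable_on {0..a}"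
    by (rule integrable_continuous_interval[OF continuous_on_subset[OF q_cont]]) auto
  have "0 \<le> integral {0..y} q" "0 \<le> integral {y..a} q"
    using integrable_subinterval_real[OF q] assms q_nonneg by (auto intro!: integral_nonneg)
  then show "0 \<le> cumul y" "cumul y \<le> L"
    unfolding cumul_def L_eq using integral_complement_left[OF q assms] by auto
qed

lemma cumul_0: "cumul 0 = 0"
  unfolding cumul_def by simp

lemma cumul_a: "cumul a = L"
  unfolding cumul_def L_eq by simp

lemma L_nonneg: "L \<ge> 0"
  using cumul_bounds[of 0] a_pos by auto

text \<open>The generating functions \<open>E = \<Sum> ladder (2m)\<close> and \<open>O = \<Sum> ladder (2m+1)\<close> would solve
  \<open>E' = q O\<close>, \<open>O' = - q E\<close> with \<open>E 0 = 1\<close>, \<open>O a = 0\<close>; the solution is \<open>(cos_profile, sin_profile)\<close>.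
  With alternating signs the system becomes \<open>E' = - q O\<close>, \<open>O' = - q E\<close>, solved by the
  hyperbolic profiles.\<close>
definition cos_profile :: "real \<Rightarrow> real" where
  "cos_profile y = cos (L - cumul y) / cos L"

definition sin_profile :: "real \<Rightarrow> real" where
  "sin_profile y = sin (L - cumul y) / cos L"

definition cosh_profile :: "real \<Rightarrow> real" where
  "cosh_profile y = cosh (L - cumul y) / cosh L"

definition sinh_profile :: "real \<Rightarrow> real" where
  "sinh_profile y = sinh (L - cumul y) / cosh L"

lemma has_real_derivative_L_minus_cumul:
  "y \<in> {0..a} \<Longrightarrow> ((\<lambda>y. L - cumul y) has_real_derivative - q y) (at y within {0..a})"
  using DERIV_diff[OF DERIV_const has_real_derivative_cumul] by simp

lemma has_real_derivative_cos_profile: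
  assumes "y \<in> {0..a}"
  shows "(cos_profile has_real_derivative q y * sin_profile y) (at y within {0..a})"
  unfolding cos_profile_def
  by (rule DERIV_cong[OF DERIV_cdivide[OF DERIV_chain2[OF DERIV_cos
        has_real_derivative_L_minus_cumul[OF assms]]]])
    (simp add: sin_profile_def)

lemma has_real_derivative_sin_profile:
  assumes "y \<in> {0..a}"
  shows "((\<lambda>y. - sin_profile y) has_real_derivative q y * cos_profile y) (at y within {0..a})"
  unfolding sin_profile_def
  by (rule DERIV_cong[OF DERIV_minus[OF DERIV_cdivide[OF DERIV_chain2[OF DERIV_sin
        has_real_derivative_L_minus_cumul[OF assms]]]]])
    (simp add: cos_profile_def)

lemma has_real_derivative_cosh_profile:
  assumes "y \<in> {0..a}"
  shows "(cosh_profile has_real_derivative - (q y * sinh_profile y)) (at y within {0..a})"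
  unfolding cosh_profile_def
  by (rule DERIV_cong[OF DERIV_cdivide[OF has_field_derivative_cosh[OF
        has_real_derivative_L_minus_cumul[OF assms]]]])
    (simp add: sinh_profile_def)

lemma has_real_derivative_sinh_profile:
  assumes "y \<in> {0..a}"
  shows "(sinh_profile has_real_derivative - (q y * cosh_profile y)) (at y within {0..a})"
  unfolding sinh_profile_def
  by (rule DERIV_cong[OF DERIV_cdivide[OF has_field_derivative_sinh[OF
        has_real_derivative_L_minus_cumul[OF assms]]]])
    (simp add: cosh_profile_def)

lemma hyperbolic_profiles_bounds:
  assumes "y \<in> {0..a}"
  shows "0 \<le> cosh_profile y" "cosh_profile y \<le> 1" "0 \<le> sinh_profile y" "sinh_profile y \<le> 1"
proof -
  have L: "0 \<le> L - cumul y" "L - cumul y \<le> L" using cumul_bounds[OF assms] by auto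
  have "cosh (L - cumul y) \<le> cosh L" using L L_nonneg by (simp add: cosh_real_nonneg_le_iff)
  moreover have "sinh (L - cumul y) \<le> cosh L"
    using L sinh_le_cosh_real[of L] sinh_real_le_iff[of "L - cumul y" L] by linarith
  moreover have "0 \<le> sinh (L - cumul y)" using L by simp
  ultimately show "0 \<le> cosh_profile y" "cosh_profile y \<le> 1" "0 \<le> sinh_profile y" "sinh_profile y \<le> 1"
    unfolding cosh_profile_def sinh_profile_def by (simp_all add: divide_le_eq_1)
qed

lemma has_integral_sum_ladder_odd:
  assumes "y \<in> {0..a}"
  shows "((\<lambda>z. q z * (\<Sum>m<N. ladder q a (2 * m + 1) z)) has_integral (\<Sum>m<N. ladder q a (2 * m + 2) y)) {0..y}"
proof -
  have "((\<lambda>z. \<Sum>m<N. q z * ladder q a (2 * m + 1) z) has_integral (\<Sum>m<N. ladder q a (2 * m + 2) y)) {0..y}"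
  proof (rule has_integral_sum)
    show "((\<lambda>z. q z * ladder q a (2 * m + 1) z) has_integral ladder q a (2 * m + 2) y) {0..y}" for m
      using has_integral_ladder[OF q_cont assms, of "2 * m + 1"] by simp
  qed simp
  then show ?thesis by (simp add: sum_distrib_left)
qed

lemma has_integral_sum_ladder_even:
  assumes "y \<in> {0..a}"
  shows "((\<lambda>z. q z * (\<Sum>m<N. ladder q a (2 * m) z)) has_integral (\<Sum>m<N. ladder q a (2 * m + 1) y)) {y..a}"
proof -
  have "((\<lambda>z. \<Sum>m<N. q z * ladder q a (2 * m) z) has_integral (\<Sum>m<N. ladder q a (2 * m + 1) y)) {y..a}"
  proof (rule has_integral_sum)
    show "((\<lambda>z. q z * ladder q a (2 * m) z) has_integral ladder q a (2 * m + 1) y) {y..a}" for m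
      using has_integral_ladder[OF q_cont assms, of "2 * m"] by simp
  qed simp
  then show ?thesis by (simp add: sum_distrib_left)
qed

lemma partial_sums_ladder_le_profiles:
  assumes L_less: "L < pi / 2" and "y \<in> {0..a}"
  shows "(\<Sum>m<N. ladder q a (2 * m) y) \<le> cos_profile y \<and> (\<Sum>m<N. ladder q a (2 * m + 1) y) \<le> sin_profile y"
  using assms(2)
proof (induction N arbitrary: y)
  case 0
  have "0 \<le> L - cumul y" "L - cumul y \<le> L" using cumul_bounds[OF "0.prems"] by auto
  then have "cos (L - cumul y) > 0" "sin (L - cumul y) \<ge> 0" "cos L > 0"
    using cos_gt_zero_pi[of "L - cumul y"] sin_ge_zero[of "L - cumul y"] cos_gt_zero_pi[of L] L_less
    by auto
  then show ?case unfolding cos_profile_def sin_profile_def by simp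
next
  case (Suc N)
  have even: "(\<Sum>m<Suc N. ladder q a (2 * m) y) \<le> cos_profile y" if y: "y \<in> {0..a}" for y
  proof -
    have "(\<Sum>m<N. ladder q a (2 * m + 2) y) \<le> cos_profile y - cos_profile 0"
      by (rule has_integral_le[OF has_integral_sum_ladder_odd[OF y]
            has_integral_of_derivative_within[OF has_real_derivative_cos_profile]])
        (use Suc.IH q_nonneg y in \<open>auto intro: mult_left_mono\<close>)
    moreover have "cos_profile 0 = 1"
      unfolding cos_profile_def cumul_0 using cos_gt_zero_pi[of L] L_nonneg L_less by simp
    moreover have "(\<Sum>m<Suc N. ladder q a (2 * m) y) = 1 + (\<Sum>m<N. ladder q a (2 * m + 2) y)"
      by (subst sum.lessThan_Suc_shift) simp
    ultimately show ?thesis by simp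
  qed
  have "(\<Sum>m<Suc N. ladder q a (2 * m + 1) y) \<le> - sin_profile a - - sin_profile y"
    by (rule has_integral_le[OF has_integral_sum_ladder_even[OF Suc.prems]
          has_integral_of_derivative_within[OF has_real_derivative_sin_profile]])
      (use even q_nonneg Suc.prems in \<open>auto intro: mult_left_mono\<close>)
  moreover have "sin_profile a = 0"
    unfolding sin_profile_def cumul_a by simp
  ultimately show ?case using even[OF Suc.prems] by simp
qed

lemma ladder_even_tendsto_0:
  assumes "L < pi / 2"
  shows "(\<lambda>M. ladder q a (2 * M + 2) a) \<longlonglongrightarrow> 0"
proof -
  have "summable (\<lambda>m. ladder q a (2 * m) a)"
  proof (rule summableI_nonneg_bounded)
    show "0 \<le> ladder q a (2 * m) a" for m
      using ladder_nonneg[OF q_cont q_nonneg] a_pos by simp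
    show "(\<Sum>m<N. ladder q a (2 * m) a) \<le> cos_profile a" for N
      using partial_sums_ladder_le_profiles[OF assms, of a N] a_pos by auto
  qed
  then have "(\<lambda>m. ladder q a (2 * m) a) \<longlonglongrightarrow> 0" by (rule summable_LIMSEQ_zero)
  then show ?thesis
    using LIMSEQ_Suc[of "\<lambda>m. ladder q a (2 * m) a"] by simp
qed

definition even_partial :: "nat \<Rightarrow> real \<Rightarrow> real" where
  "even_partial M y = (\<Sum>m<Suc M. (-1) ^ m * ladder q a (2 * m) y)"

definition odd_partial :: "nat \<Rightarrow> real \<Rightarrow> real" where
  "odd_partial M y = (\<Sum>m<M. (-1) ^ m * ladder q a (2 * m + 1) y)"

lemma even_partial_eq: "even_partial M y = 1 - (\<Sum>k<M. (-1) ^ k * ladder q a (2 * k + 2) y)"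
  unfolding even_partial_def
  by (subst sum.lessThan_Suc_shift) (simp add: sum_negf[symmetric])

lemma has_real_derivative_even_partial:
  assumes "y \<in> {0..a}"
  shows "(even_partial M has_real_derivative - (q y * odd_partial M y)) (at y within {0..a})"
proof -
  have "((\<lambda>y. 1 - (\<Sum>k<M. (-1) ^ k * ladder q a (Suc (2 * k + 1)) y)) has_real_derivative
      0 - (\<Sum>k<M. (-1) ^ k * (q y * ladder q a (2 * k + 1) y))) (at y within {0..a})"
  proof (intro DERIV_diff DERIV_const DERIV_sum DERIV_cmult)
    show "(ladder q a (Suc (2 * k + 1)) has_real_derivative q y * ladder q a (2 * k + 1) y)
        (at y within {0..a})" for k
      using has_real_derivative_ladder[OF q_cont assms, of "2 * k + 1"] by simp
  qed
  then show ?thesis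
    unfolding even_partial_eq[abs_def] odd_partial_def
    by (simp add: sum_distrib_left mult_ac)
qed

lemma has_real_derivative_odd_partial:
  assumes "y \<in> {0..a}"
  shows "(odd_partial (Suc M) has_real_derivative - (q y * even_partial M y)) (at y within {0..a})"
proof -
  have "((\<lambda>y. \<Sum>m<Suc M. (-1) ^ m * ladder q a (Suc (2 * m)) y) has_real_derivative
      (\<Sum>m<Suc M. (-1) ^ m * - (q y * ladder q a (2 * m) y))) (at y within {0..a})"
  proof (intro DERIV_sum DERIV_cmult)
    show "(ladder q a (Suc (2 * k)) has_real_derivative - (q y * ladder q a (2 * k) y))
        (at y within {0..a})" for k
      using has_real_derivative_ladder[OF q_cont assms, of "2 * k"] by simp
  qed
  moreover have "(\<Sum>m<Suc M. (-1) ^ m * - (q y * ladder q a (2 * m) y)) = - (q y * even_partial M y)"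
    unfolding even_partial_def sum_distrib_left sum_negf[symmetric]
    by (rule sum.cong) (simp_all add: algebra_simps)
  ultimately show ?thesis
    unfolding odd_partial_def by simp
qed

lemma even_partial_0: "even_partial M 0 = 1"
  unfolding even_partial_eq by (simp add: ladder.simps)

lemma odd_partial_a: "odd_partial M a = 0"
  unfolding odd_partial_def by (simp add: ladder.simps)

lemma abs_integral_le_ladder:
  assumes "((\<lambda>z. (-1) ^ M * (q z * p z * ladder q a (2 * M + 1) z)) has_integral I) {0..a}"
    and "\<And>z. z \<in> {0..a} \<Longrightarrow> 0 \<le> p z \<and> p z \<le> 1"
  shows "\<bar>I\<bar> \<le> ladder q a (2 * M + 2) a"
proof -
  have ladder: "((\<lambda>z. q z * ladder q a (2 * M + 1) z) has_integral ladder q a (2 * M + 2) a) {0..a}"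
    using has_integral_ladder[OF q_cont, of a a "2 * M + 1"] a_pos by simp
  have "\<bar>(-1) ^ M * (q z * p z * ladder q a (2 * M + 1) z)\<bar> \<le> q z * ladder q a (2 * M + 1) z"
    if "z \<in> {0..a}" for z
  proof -
    have nonneg: "0 \<le> q z" "0 \<le> ladder q a (2 * M + 1) z" "0 \<le> p z" "p z \<le> 1"
      using q_nonneg ladder_nonneg[OF q_cont q_nonneg that] assms(2)[OF that] by auto
    then have "\<bar>(-1) ^ M * (q z * p z * ladder q a (2 * M + 1) z)\<bar>
        = p z * (q z * ladder q a (2 * M + 1) z)"
      by (simp add: abs_mult power_abs mult_ac)
    with nonneg show ?thesis by (simp add: mult_left_le_one_le)
  qed
  then have "I \<le> ladder q a (2 * M + 2) a" "- ladder q a (2 * M + 2) a \<le> I"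
    by (intro has_integral_le[OF assms(1) ladder] has_integral_le[OF has_integral_neg[OF ladder] assms(1)];
        force simp: abs_le_iff)+
  then show ?thesis by simp
qed

lemma odd_partial_Suc: "odd_partial (Suc M) y = odd_partial M y + (-1) ^ M * ladder q a (2 * M + 1) y"
  unfolding odd_partial_def by simp

lemma has_real_derivative_sinh_wronskian:
  assumes "y \<in> {0..a}"
  shows "((\<lambda>y. even_partial M y * sinh_profile y - odd_partial (Suc M) y * cosh_profile y)
      has_real_derivative (-1) ^ M * (q y * sinh_profile y * ladder q a (2 * M + 1) y)) (at y within {0..a})"
  by (rule DERIV_cong[OF DERIV_diff[OF
        DERIV_mult[OF has_real_derivative_even_partial[OF assms] has_real_derivative_sinh_profile[OF assms]]
        DERIV_mult[OF has_real_derivative_odd_partial[OF assms] has_real_derivative_cosh_profile[OF assms]]]])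
    (simp add: odd_partial_Suc algebra_simps)

lemma has_real_derivative_cosh_wronskian:
  assumes "y \<in> {0..a}"
  shows "((\<lambda>y. even_partial M y * cosh_profile y - odd_partial (Suc M) y * sinh_profile y)
      has_real_derivative (-1) ^ M * (q y * cosh_profile y * ladder q a (2 * M + 1) y)) (at y within {0..a})"
  by (rule DERIV_cong[OF DERIV_diff[OF
        DERIV_mult[OF has_real_derivative_even_partial[OF assms] has_real_derivative_cosh_profile[OF assms]]
        DERIV_mult[OF has_real_derivative_odd_partial[OF assms] has_real_derivative_sinh_profile[OF assms]]]])
    (simp add: odd_partial_Suc algebra_simps)

text \<open>For the exact hyperbolic system both Wronskians would be constant; for the partial sums
  their derivatives are the first omitted term, whose integral is bounded by \<open>ladder q a (2M+2) a\<close>.\<close>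
lemma partial_sums_approx:
  shows "\<bar>odd_partial (Suc M) 0 - tanh L\<bar> \<le> ladder q a (2 * M + 2) a"
    and "\<bar>even_partial M a / cosh L - (1 - odd_partial (Suc M) 0 * tanh L)\<bar> \<le> ladder q a (2 * M + 2) a"
proof -
  have boundary_values: "sinh_profile 0 = tanh L" "cosh_profile 0 = 1" "sinh_profile a = 0" "cosh_profile a = 1 / cosh L"
    unfolding sinh_profile_def cosh_profile_def cumul_0 cumul_a by (simp_all add: tanh_def)
  have "\<bar>(even_partial M a * sinh_profile a - odd_partial (Suc M) a * cosh_profile a) -
      (even_partial M 0 * sinh_profile 0 - odd_partial (Suc M) 0 * cosh_profile 0)\<bar> \<le> ladder q a (2 * M + 2) a"
    by (rule abs_integral_le_ladder[where p = sinh_profile,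
          OF has_integral_of_derivative_within[OF has_real_derivative_sinh_wronskian]])
      (use hyperbolic_profiles_bounds a_pos in auto)
  then show "\<bar>odd_partial (Suc M) 0 - tanh L\<bar> \<le> ladder q a (2 * M + 2) a"
    by (simp add: boundary_values even_partial_0 odd_partial_a abs_minus_commute)
  have "\<bar>(even_partial M a * cosh_profile a - odd_partial (Suc M) a * sinh_profile a) -
      (even_partial M 0 * cosh_profile 0 - odd_partial (Suc M) 0 * sinh_profile 0)\<bar> \<le> ladder q a (2 * M + 2) a"
    by (rule abs_integral_le_ladder[where p = cosh_profile,
          OF has_integral_of_derivative_within[OF has_real_derivative_cosh_wronskian]])
      (use hyperbolic_profiles_bounds a_pos in auto)
  then show "\<bar>even_partial M a / cosh L - (1 - odd_partial (Suc M) 0 * tanh L)\<bar> \<le> ladder q a (2 * M + 2) a"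
    by (simp add: boundary_values even_partial_0 odd_partial_a)
qed

theorem sums_alternating_ladder:
  assumes "L < pi / 2"
  shows "(\<lambda>m. (-1) ^ m * ladder q a (2 * m + 1) 0) sums tanh L"
    and "(\<lambda>m. (-1) ^ m * ladder q a (2 * m) a) sums (1 / cosh L)"
proof -
  note error_to_0 = ladder_even_tendsto_0[OF assms]
  have "(\<lambda>M. odd_partial (Suc M) 0 - tanh L) \<longlonglongrightarrow> 0"
    by (rule Lim_null_comparison[OF _ error_to_0]) (use partial_sums_approx(1) in simp)
  then have odd: "(\<lambda>M. odd_partial (Suc M) 0) \<longlonglongrightarrow> tanh L"
    by (rule LIM_zero_cancel)
  then show "(\<lambda>m. (-1) ^ m * ladder q a (2 * m + 1) 0) sums tanh L"
    unfolding sums_def odd_partial_def[symmetric] by (rule LIMSEQ_imp_Suc)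
  have "(\<lambda>M. even_partial M a / cosh L - (1 - odd_partial (Suc M) 0 * tanh L)) \<longlonglongrightarrow> 0"
    by (rule Lim_null_comparison[OF _ error_to_0]) (use partial_sums_approx(2) in simp)
  moreover have "(\<lambda>M. 1 - odd_partial (Suc M) 0 * tanh L) \<longlonglongrightarrow> 1 - tanh L * tanh L"
    by (intro tendsto_intros odd)
  ultimately have "(\<lambda>M. even_partial M a / cosh L) \<longlonglongrightarrow> 1 - tanh L * tanh L"
    by (rule Lim_transform[rotated])
  then have "(\<lambda>M. cosh L * (even_partial M a / cosh L)) \<longlonglongrightarrow> cosh L * (1 - tanh L * tanh L)"
    by (intro tendsto_intros)
  moreover have "cosh L * (1 - tanh L * tanh L) = 1 / cosh L"
    by (rule cosh_mult_one_minus_tanh_sq)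
  ultimately have "(\<lambda>M. even_partial M a) \<longlonglongrightarrow> 1 / cosh L"
    by simp
  then show "(\<lambda>m. (-1) ^ m * ladder q a (2 * m) a) sums (1 / cosh L)"
    unfolding sums_def even_partial_def by (rule LIMSEQ_imp_Suc)
qed

end

section \<open>Reflection and transmission coefficients for step data\<close>

lemma sets_altset:
  "a \<ge> 0 \<Longrightarrow> altset n a \<in> sets (PiM {1..n} (\<lambda>_. lborel::real measure))"
  using altset_eq_altset_prefix sets_altset_prefix by simp

lemma set_integral_altset_prod_scaled:
  assumes q: "continuous_on UNIV q" and q_nonneg: "\<And>z. q z \<ge> 0" and a: "a \<ge> 0"
    and r: "\<And>x. x \<in> {0..a} \<Longrightarrow> r x = s * q x"
  shows "(LINT x : altset n a | PiM {1..n} (\<lambda>_. lborel). (\<Prod>j=1..n. r (x j)))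
           = s ^ n * ladder q a n (if odd n then 0 else a)"
proof -
  have "(LINT x : altset n a | PiM {1..n} (\<lambda>_. lborel). (\<Prod>j=1..n. r (x j)))
      = (LINT x : altset n a | PiM {1..n} (\<lambda>_. lborel). s ^ n * (\<Prod>j=1..n. q (x j)))"
  proof (rule set_lebesgue_integral_cong[OF sets_altset[OF a]], intro allI impI)
    fix x assume "x \<in> altset n a"
    then have "x j \<in> {0..a}" if "j \<in> {1..n}" for j
      using that by (auto simp: altset_def PiE_def Pi_def)
    then show "(\<Prod>j=1..n. r (x j)) = s ^ n * (\<Prod>j=1..n. q (x j))"
      by (simp add: r prod.distrib)
  qed
  then show ?thesis
    using set_integral_altset_prod[OF q q_nonneg a] by simp
qed

lemma that_le:
  assumes "\<And>j. j \<in> {1..n} \<Longrightarrow> \<bar>\<tau> (x j)\<bar> \<le> B"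
  shows "that \<tau> n x \<le> 2 * real n * B"
proof -
  have "(\<Sum>j=1..n. (-1) ^ (j + 1) * \<tau> (x j)) \<le> (\<Sum>j=1..n. \<bar>(-1) ^ (j + 1) * \<tau> (x j)\<bar>)"
    by (rule order_trans[OF abs_ge_self sum_abs])
  also have "\<dots> \<le> (\<Sum>j=1..n. B)"
    by (rule sum_mono) (simp add: abs_mult assms)
  finally show ?thesis unfolding that_def by simp
qed

lemma that_altset_le:
  assumes "\<And>y. y \<in> {0..a} \<Longrightarrow> \<bar>\<tau> y\<bar> \<le> B" "x \<in> altset n a"
  shows "that \<tau> n x \<le> 2 * real n * B"
  using assms by (intro that_le) (auto simp: altset_def PiE_def Pi_def)

lemma tau_bounded:
  assumes "continuous_on {0..a} c" "\<And>s. s \<in> {0..a} \<Longrightarrow> c s > 0"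
  obtains B where "\<And>y. y \<in> {0..a} \<Longrightarrow> \<bar>tau c y\<bar> \<le> B"
proof -
  have "\<forall>s\<in>{0..a}. c s \<noteq> 0" using assms(2) by force
  then have "continuous_on {0..a} (\<lambda>s. 1 / c s)"
    using assms(1) by (intro continuous_on_divide continuous_on_const) auto
  then have "continuous_on {0..a} (tau c)"
    unfolding tau_def by (intro indefinite_integral_continuous_1 integrable_continuous_interval)
  then have "bounded (tau c ` {0..a})"
    by (intro compact_imp_bounded compact_continuous_image) auto
  then show ?thesis
    using that unfolding bounded_real by blast
qed

lemma Rcoef_eventually_eq:
  assumes p0: "\<And>\<xi>. \<xi> \<le> 0 \<Longrightarrow> p0 \<xi> = 1" and cm: "cm \<ge> 0" and a: "a \<ge> 0"
    and \<tau>0: "\<tau> 0 = 0" and B: "\<And>y. y \<in> {0..a} \<Longrightarrow> \<bar>\<tau> y\<bar> \<le> B"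
  shows "\<forall>\<^sub>F t in at_top. Rcoef p0 cm \<tau> r a m t
           = (-1) ^ m * (LINT x : altset (2 * m + 1) a | PiM {1..2 * m + 1} (\<lambda>_. lborel).
               (\<Prod>j=1..2 * m + 1. r (x j)))"
proof (rule eventually_at_top_linorderI)
  fix t assume t: "t \<ge> 2 * real (2 * m + 1) * B"
  have "p0 (xiR cm \<tau> (2 * m + 1) x 0 t) = 1" if "x \<in> altset (2 * m + 1) a" for x
  proof -
    have "that \<tau> (2 * m + 1) x \<le> t"
      using that_altset_le[where \<tau> = \<tau>, OF B that] t by linarith
    then have "0 \<le> cm * (t - that \<tau> (2 * m + 1) x)" using cm by simp
    then show ?thesis by (intro p0) (simp add: xiR_def \<tau>0)
  qed
  then have "(LINT x : altset (2 * m + 1) a | PiM {1..2 * m + 1} (\<lambda>_. lborel).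
        p0 (xiR cm \<tau> (2 * m + 1) x 0 t) * (\<Prod>j=1..2 * m + 1. r (x j)))
      = (LINT x : altset (2 * m + 1) a | PiM {1..2 * m + 1} (\<lambda>_. lborel). (\<Prod>j=1..2 * m + 1. r (x j)))"
    by (intro set_lebesgue_integral_cong[OF sets_altset[OF a]]) simp
  then show "Rcoef p0 cm \<tau> r a m t = (-1) ^ m * (LINT x : altset (2 * m + 1) a | PiM {1..2 * m + 1} (\<lambda>_. lborel).
      (\<Prod>j=1..2 * m + 1. r (x j)))"
    unfolding Rcoef_def by simp
qed

lemma Tcoef_eventually_eq:
  assumes p0: "\<And>\<xi>. \<xi> \<le> 0 \<Longrightarrow> p0 \<xi> = 1" and cm: "cm \<ge> 0" and a: "a \<ge> 0"
    and B: "\<And>y. y \<in> {0..a} \<Longrightarrow> \<bar>\<tau> y\<bar> \<le> B"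
  shows "\<forall>\<^sub>F t in at_top. Tcoef p0 cm CG \<tau> r a m t
           = (-1) ^ m * CG * (LINT x : altset (2 * m) a | PiM {1..2 * m} (\<lambda>_. lborel).
               (\<Prod>j=1..2 * m. r (x j)))"
proof (rule eventually_at_top_linorderI)
  fix t assume t: "t \<ge> (2 * real (2 * m) + 1) * B"
  have \<tau>a: "\<tau> a \<le> B" using B[of a] a by simp
  have "(LINT x : altset (2 * m) a | PiM {1..2 * m} (\<lambda>_. lborel).
        p0 (xiT cm \<tau> (2 * m) x a t) * (\<Prod>j=1..2 * m. r (x j)))
      = (LINT x : altset (2 * m) a | PiM {1..2 * m} (\<lambda>_. lborel). (\<Prod>j=1..2 * m. r (x j)))"
  proof (intro set_lebesgue_integral_cong[OF sets_altset[OF a]] allI impI)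
    fix x assume "x \<in> altset (2 * m) a"
    have "that \<tau> (2 * m) x + \<tau> a \<le> t"
      using that_altset_le[where \<tau> = \<tau>, OF B \<open>x \<in> altset (2 * m) a\<close>] t \<tau>a
      by (simp add: algebra_simps)
    then have "0 \<le> cm * (t - that \<tau> (2 * m) x - \<tau> a)" using cm by simp
    then show "p0 (xiT cm \<tau> (2 * m) x a t) * (\<Prod>j=1..2 * m. r (x j)) = (\<Prod>j=1..2 * m. r (x j))"
      by (simp add: p0 xiT_def)
  qed
  moreover have "p0 (- cm * (t - \<tau> a)) = 1" if "m = 0"
    using t \<tau>a cm that by (intro p0) (simp add: mult_nonneg_nonneg)
  moreover have "(LINT x : altset 0 a | PiM {1..0} (\<lambda>_. lborel). (\<Prod>j=1..0. r (x j))) = 1"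
    using set_integral_altset_prod[of "\<lambda>_. 1" a 0] a by simp
  ultimately show "Tcoef p0 cm CG \<tau> r a m t = (-1) ^ m * CG * (LINT x : altset (2 * m) a | PiM {1..2 * m} (\<lambda>_. lborel).
      (\<Prod>j=1..2 * m. r (x j)))"
    unfolding Tcoef_def by simp
qed

section \<open>The layered medium\<close>

lemma mono_on_has_real_derivative_nonneg:
  fixes f :: "real \<Rightarrow> real"
  assumes mono: "mono_on {a..b} f" and "a < b" and x: "x \<in> {a..b}"
    and deriv: "(f has_real_derivative D) (at x within {a..b})"
  shows "D \<ge> 0"
proof (rule tendsto_lowerbound)
  show "((\<lambda>y. (f y - f x) / (y - x)) \<longlongrightarrow> D) (at x within {a..b})"
    using deriv by (simp add: has_field_derivative_iff)
  have "0 \<le> (f y - f x) / (y - x)" if "y \<in> {a..b}" "y \<noteq> x" for y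
  proof (cases "x < y")
    case True
    then show ?thesis using mono_onD[OF mono x that(1)] by simp
  next
    case False
    then show ?thesis using mono_onD[OF mono that(1) x] that(2) by (simp add: divide_nonpos_neg)
  qed
  then show "\<forall>\<^sub>F y in at x within {a..b}. 0 \<le> (f y - f x) / (y - x)"
    by (auto simp: eventually_at_filter)
  show "at x within {a..b} \<noteq> bot"
    using assms(2) x by (simp add: trivial_limit_within)
qed

lemma continuous_eq_const_below:
  fixes f :: "real \<Rightarrow> real"
  assumes "continuous_on UNIV f" "\<forall>x<b. f x = c"
  shows "f b = c"
proof -
  have "(f \<longlongrightarrow> f b) (at_left b)"
    using assms(1) by (simp add: continuous_on_eq_continuous_at filterlim_at_split isCont_def)
  moreover have "(f \<longlongrightarrow> c) (at_left b)"
    using assms(2) by (intro tendsto_eventually) (auto simp: eventually_at_filter)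
  ultimately show ?thesis
    using tendsto_unique[OF trivial_limit_at_left_real] by blast
qed

lemma continuous_eq_const_above:
  fixes f :: "real \<Rightarrow> real"
  assumes "continuous_on UNIV f" "\<forall>x>b. f x = c"
  shows "f b = c"
proof -
  have "(f \<longlongrightarrow> f b) (at_right b)"
    using assms(1) by (simp add: continuous_on_eq_continuous_at filterlim_at_split isCont_def)
  moreover have "(f \<longlongrightarrow> c) (at_right b)"
    using assms(2) by (intro tendsto_eventually) (auto simp: eventually_at_filter)
  ultimately show ?thesis
    using tendsto_unique[OF trivial_limit_at_right_real] by blast
qed

lemma C1_on_sqrt_mult:
  fixes K \<rho> :: "real \<Rightarrow> real"
  assumes "\<exists>K'. (\<forall>x\<in>S. (K has_real_derivative K' x) (at x within S)) \<and> continuous_on S K'"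
    and "\<exists>\<rho>'. (\<forall>x\<in>S. (\<rho> has_real_derivative \<rho>' x) (at x within S)) \<and> continuous_on S \<rho>'"
    and pos: "\<And>x. x \<in> S \<Longrightarrow> K x * \<rho> x > 0"
  shows "\<exists>Z'. (\<forall>x\<in>S. ((\<lambda>y. sqrt (K y * \<rho> y)) has_real_derivative Z' x) (at x within S))
               \<and> continuous_on S Z'"
proof -
  obtain K' \<rho>' where K: "\<And>x. x \<in> S \<Longrightarrow> (K has_real_derivative K' x) (at x within S)" "continuous_on S K'"
    and \<rho>: "\<And>x. x \<in> S \<Longrightarrow> (\<rho> has_real_derivative \<rho>' x) (at x within S)" "continuous_on S \<rho>'"
    using assms(1,2) by blast
  let ?Z' = "\<lambda>x. inverse (sqrt (K x * \<rho> x)) / 2 * (K' x * \<rho> x + \<rho>' x * K x)"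
  have "((\<lambda>y. sqrt (K y * \<rho> y)) has_real_derivative ?Z' x) (at x within S)" if "x \<in> S" for x
    by (rule DERIV_chain2[OF DERIV_real_sqrt[OF pos[OF that]] DERIV_mult[OF K(1)[OF that] \<rho>(1)[OF that]]])
  moreover have "continuous_on S K" "continuous_on S \<rho>"
    unfolding continuous_on_eq_continuous_within
    using DERIV_continuous[OF K(1)] DERIV_continuous[OF \<rho>(1)] by blast+
  moreover have "sqrt (K x * \<rho> x) \<noteq> 0" if "x \<in> S" for x
    using pos[OF that] by auto
  ultimately show ?thesis
    using K(2) \<rho>(2) by (intro exI[of _ ?Z'] conjI ballI continuous_intros) auto
qed

lemma has_integral_log_derivative:
  fixes Z Z' :: "real \<Rightarrow> real"
  assumes "a \<ge> 0" and Z_pos: "\<And>x. x \<in> {0..a} \<Longrightarrow> Z x > 0"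
    and Z': "\<And>x. x \<in> {0..a} \<Longrightarrow> (Z has_real_derivative Z' x) (at x within {0..a})"
  shows "((\<lambda>x. Z' x / (2 * Z x)) has_integral ((ln (Z a) - ln (Z 0)) / 2)) {0..a}"
proof -
  have "((\<lambda>y. ln (Z y) / 2) has_real_derivative Z' x / (2 * Z x)) (at x within {0..a})"
    if "x \<in> {0..a}" for x
    using DERIV_cdivide[OF DERIV_chain2[OF DERIV_ln[OF Z_pos[OF that]] Z'[OF that]], of 2]
    by (simp add: field_simps)
  then show ?thesis
    using has_integral_of_derivative_within[of 0 a "\<lambda>y. ln (Z y) / 2"] assms(1)
    by (simp add: diff_divide_distrib)
qed

lemma monotone_derivative_sign:
  fixes Z Z' :: "real \<Rightarrow> real"
  assumes a: "a > 0"
    and Z': "\<And>x. x \<in> {0..a} \<Longrightarrow> (Z has_real_derivative Z' x) (at x within {0..a})"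
    and Z_mono: "mono_on {0..a} Z \<or> antimono_on {0..a} Z"
  obtains s :: real where "s = 1 \<or> s = -1" "\<And>x. x \<in> {0..a} \<Longrightarrow> s * Z' x \<ge> 0"
proof (cases "mono_on {0..a} Z")
  case True
  then show ?thesis
    using mono_on_has_real_derivative_nonneg[OF True a _ Z'] that[of 1] by simp
next
  case False
  then have "mono_on {0..a} (\<lambda>y. - Z y)"
    using Z_mono by (auto simp: monotone_on_def)
  then show ?thesis
    using mono_on_has_real_derivative_nonneg[OF _ a _ DERIV_minus[OF Z']] that[of "-1"] by simp
qed

text \<open>Clamping the argument to \<open>[0, a]\<close> extends the sign-normalised log-derivative
  continuously to the real line.\<close>
lemma log_derivative_sign_normalized:
  fixes Z :: "real \<Rightarrow> real"
  assumes a: "a > 0" and Z_pos: "\<And>x. x \<in> {0..a} \<Longrightarrow> Z x > 0"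
    and Z_C1: "\<exists>Z'. (\<forall>x\<in>{0..a}. (Z has_real_derivative Z' x) (at x within {0..a})) \<and> continuous_on {0..a} Z'"
    and Z_mono: "mono_on {0..a} Z \<or> antimono_on {0..a} Z"
  obtains s q where "s = 1 \<or> s = -1" "continuous_on UNIV q" "\<And>z. q z \<ge> 0"
    "\<And>x. x \<in> {0..a} \<Longrightarrow> vector_derivative Z (at x within {0..a}) / (2 * Z x) = s * q x"
    "integral {0..a} q = s * ((ln (Z a) - ln (Z 0)) / 2)"
proof -
  obtain Z' where Z': "\<And>x. x \<in> {0..a} \<Longrightarrow> (Z has_real_derivative Z' x) (at x within {0..a})"
    and Z'_cont: "continuous_on {0..a} Z'"
    using Z_C1 by blast
  obtain s where s: "s = 1 \<or> s = -1" "\<And>x. x \<in> {0..a} \<Longrightarrow> s * Z' x \<ge> 0"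
    using monotone_derivative_sign[OF a Z' Z_mono] by blast
  define r where "r x = Z' x / (2 * Z x)" for x
  define clamp where "clamp x = max 0 (min a x)" for x
  have clamp: "clamp x \<in> {0..a}" "x \<in> {0..a} \<Longrightarrow> clamp x = x" for x
    using a by (auto simp: clamp_def)
  have "continuous_on {0..a} Z"
    unfolding continuous_on_eq_continuous_within using DERIV_continuous[OF Z'] by blast
  then have r_cont: "continuous_on {0..a} r"
    unfolding r_def using Z'_cont Z_pos by (intro continuous_intros) force+
  have "continuous_on UNIV (\<lambda>x. s * r (clamp x))"
    using clamp(1) unfolding clamp_def
    by (intro continuous_intros continuous_on_compose2[OF r_cont]) auto
  moreover have "s * r (clamp x) \<ge> 0" for x
  proof -
    have "s * r (clamp x) = s * Z' (clamp x) / (2 * Z (clamp x))" by (simp add: r_def)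
    then show ?thesis
      using s(2)[OF clamp(1)[of x]] Z_pos[OF clamp(1)[of x]] by (simp add: divide_nonneg_pos)
  qed
  moreover have "vector_derivative Z (at x within {0..a}) / (2 * Z x) = s * (s * r (clamp x))"
    if "x \<in> {0..a}" for x
  proof -
    have "vector_derivative Z (at x within {0..a}) = Z' x"
      using Z'[OF that] a that
      by (intro vector_derivative_within_closed_interval)
        (auto simp: has_real_derivative_iff_has_vector_derivative)
    then show ?thesis
      using clamp(2)[OF that] s(1) by (auto simp: r_def)
  qed
  moreover have "integral {0..a} (\<lambda>x. s * r (clamp x)) = s * ((ln (Z a) - ln (Z 0)) / 2)"
  proof -
    have "integral {0..a} (\<lambda>x. s * r (clamp x)) = integral {0..a} (\<lambda>x. s * r x)"
      by (rule integral_cong) (simp add: clamp(2))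
    also have "\<dots> = s * integral {0..a} r"
      using integral_cmul[of "{0..a}" s r] by simp
    also have "integral {0..a} r = (ln (Z a) - ln (Z 0)) / 2"
      using has_integral_log_derivative[OF less_imp_le[OF a] Z_pos Z'] unfolding r_def[abs_def]
      by (rule integral_unique)
    finally show ?thesis .
  qed
  ultimately show ?thesis
    by (rule that[OF s(1)])
qed

lemma step_response_series:
  assumes p0: "\<And>\<xi>. \<xi> \<le> 0 \<Longrightarrow> p0 \<xi> = 1" and cm: "cm \<ge> 0" and a: "a > 0"
    and \<tau>0: "\<tau> 0 = 0" and B: "\<And>y. y \<in> {0..a} \<Longrightarrow> \<bar>\<tau> y\<bar> \<le> B"
    and q: "continuous_on UNIV q" "\<And>z. q z \<ge> 0" and s: "s = 1 \<or> s = -1"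
    and r: "\<And>x. x \<in> {0..a} \<Longrightarrow> r x = s * q x"
    and L: "integral {0..a} q = s * L" and L_less: "\<bar>L\<bar> < pi / 2"
  shows "\<exists>Tinf Rinf :: nat \<Rightarrow> real.
           (\<forall>m. ((\<lambda>t. Tcoef p0 cm CG \<tau> r a m t) \<longlongrightarrow> Tinf m) at_top)
         \<and> (\<forall>m. ((\<lambda>t. Rcoef p0 cm \<tau> r a m t) \<longlongrightarrow> Rinf m) at_top)
         \<and> Tinf sums (CG / cosh L) \<and> Rinf sums tanh L"
proof (intro exI conjI allI)
  have s_pow: "s ^ (2 * m) = 1" "s ^ (2 * m + 1) = s" for m
    using s by (auto simp: power_mult)
  note ladder_integral = set_integral_altset_prod_scaled[OF q less_imp_le[OF a] r]
  show "((\<lambda>t. Tcoef p0 cm CG \<tau> r a m t) \<longlongrightarrow> (-1) ^ m * CG * ladder q a (2 * m) a) at_top" for m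
    using ladder_integral[of "2 * m", unfolded s_pow] Tcoef_eventually_eq[of p0 cm a \<tau> B CG r m, OF p0 cm less_imp_le[OF a] B]
    by (intro tendsto_eventually) simp
  show "((\<lambda>t. Rcoef p0 cm \<tau> r a m t) \<longlongrightarrow> s * ((-1) ^ m * ladder q a (2 * m + 1) 0)) at_top" for m
    using ladder_integral[of "2 * m + 1", unfolded s_pow] Rcoef_eventually_eq[of p0 cm a \<tau> B r m, OF p0 cm less_imp_le[OF a] \<tau>0 B]
    by (intro tendsto_eventually) (simp add: mult_ac)
  have "s * L < pi / 2" using s L_less by auto
  note sums = sums_alternating_ladder[OF q a L[symmetric] this]
  have cosh: "cosh (s * L) = cosh L" and tanh: "s * tanh (s * L) = tanh L"
    using s by auto
  show "(\<lambda>m. (-1) ^ m * CG * ladder q a (2 * m) a) sums (CG / cosh L)"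
    using sums_mult[OF sums(2), of CG, unfolded cosh] by (simp add: mult_ac)
  show "(\<lambda>m. s * ((-1) ^ m * ladder q a (2 * m + 1) 0)) sums tanh L"
    using sums_mult[OF sums(1), of s, unfolded tanh] .
qed

lemma impedance_ratio_closed_forms:
  fixes Zm Zp :: real
  assumes "Zm > 0" "Zp > 0"
  defines "g \<equiv> sqrt (Zp / Zm)"
  shows "2 * Zp / (Zm + Zp) = g / cosh (ln g)" and "(Zp - Zm) / (Zm + Zp) = tanh (ln g)"
proof -
  have g: "g > 0" "g ^ 2 = Zp / Zm" unfolding g_def using assms by simp_all
  show "2 * Zp / (Zm + Zp) = g / cosh (ln g)"
    using g assms by (simp add: cosh_ln_real field_simps power2_eq_square)
  have "Zp / Zm - 1 = (Zp - Zm) / Zm" "Zp / Zm + 1 = (Zm + Zp) / Zm"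
    using assms by (simp_all add: field_simps)
  then have "(Zp / Zm - 1) / (Zp / Zm + 1) = (Zp - Zm) / (Zm + Zp)"
    using assms by simp
  then show "(Zp - Zm) / (Zm + Zp) = tanh (ln g)"
    using g by (simp add: tanh_ln_real)
qed

lemma impedance_at_endpoints:
  fixes K \<rho> :: "real \<Rightarrow> real"
  assumes "continuous_on UNIV K" "continuous_on UNIV \<rho>"
    and "\<forall>x<0. K x = Km \<and> \<rho> x = \<rho>m" "\<forall>x>b. K x = Kp \<and> \<rho> x = \<rho>p"
  shows "sqrt (K 0 * \<rho> 0) = sqrt (Km * \<rho>m)" "sqrt (K b * \<rho> b) = sqrt (Kp * \<rho>p)"
proof -
  have "K 0 = Km" "\<rho> 0 = \<rho>m"
    using assms(3) by (intro continuous_eq_const_below[OF assms(1)] continuous_eq_const_below[OF assms(2)];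
        simp)+
  moreover have "K b = Kp" "\<rho> b = \<rho>p"
    using assms(4) by (intro continuous_eq_const_above[OF assms(1)] continuous_eq_const_above[OF assms(2)];
        simp)+
  ultimately show "sqrt (K 0 * \<rho> 0) = sqrt (Km * \<rho>m)" "sqrt (K b * \<rho> b) = sqrt (Kp * \<rho>p)"
    by simp_all
qed

lemma tau_sqrt_divide_bounded:
  fixes K \<rho> :: "real \<Rightarrow> real"
  assumes "continuous_on UNIV K" "continuous_on UNIV \<rho>" "\<forall>x. K x > 0" "\<forall>x. \<rho> x > 0"
  obtains B where "\<And>y. y \<in> {0..a} \<Longrightarrow> \<bar>tau (\<lambda>x. sqrt (K x / \<rho> x)) y\<bar> \<le> B"
proof -
  have "\<rho> x \<noteq> 0" for x
    using assms(4) by (metis less_irrefl)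
  then have "continuous_on UNIV (\<lambda>x. sqrt (K x / \<rho> x))"
    using assms(1,2) by (intro continuous_intros) auto
  then have "continuous_on {0..a} (\<lambda>x. sqrt (K x / \<rho> x))"
    by (rule continuous_on_subset) simp
  moreover have "sqrt (K x / \<rho> x) > 0" if "x \<in> {0..a}" for x
    using assms(3,4) by simp
  ultimately show ?thesis
    using tau_bounded that by blast
qed

lemma abs_ln_sqrt_less_pi_half:
  fixes x :: real
  assumes "exp (- pi) < x" "x < exp pi"
  shows "\<bar>ln (sqrt x)\<bar> < pi / 2"
proof -
  have "x > 0" using assms(1) exp_gt_zero[of "- pi"] by linarith
  moreover have "- pi < ln x" "ln x < pi"
    using assms \<open>x > 0\<close> ln_less_cancel_iff[of "exp (- pi)" x] ln_less_cancel_iff[of x "exp pi"] by auto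
  ultimately show ?thesis by (simp add: ln_sqrt)
qed

theorem mainTheorem3:
  fixes K \<rho> :: "real \<Rightarrow> real" and xp Km \<rho>m Kp \<rho>p :: real
  defines "Z \<equiv> \<lambda>x. sqrt (K x * \<rho> x)"
    and "c \<equiv> \<lambda>x. sqrt (K x / \<rho> x)"
    and "Zm \<equiv> sqrt (Km * \<rho>m)" and "Zp \<equiv> sqrt (Kp * \<rho>p)"
    and "cm \<equiv> sqrt (Km / \<rho>m)"
    and "CG \<equiv> sqrt (sqrt (Kp * \<rho>p) / sqrt (Km * \<rho>m))"
    and "r \<equiv> \<lambda>x. vector_derivative (\<lambda>y. sqrt (K y * \<rho> y)) (at x within {0..xp})
                 / (2 * sqrt (K x * \<rho> x))"
    and "p0 \<equiv> \<lambda>\<xi>::real. if \<xi> \<le> 0 then (1::real) else 0"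
  assumes xp_pos: "xp > 0"
    and K_pos: "\<forall>x. K x > 0" and \<rho>_pos: "\<forall>x. \<rho> x > 0"
    and K_cont: "continuous_on UNIV K" and \<rho>_cont: "continuous_on UNIV \<rho>"
    and left: "\<forall>x<0. K x = Km \<and> \<rho> x = \<rho>m"
    and right: "\<forall>x>xp. K x = Kp \<and> \<rho> x = \<rho>p"
    and K_C1: "\<exists>K'. (\<forall>x\<in>{0..xp}. (K has_real_derivative K' x) (at x within {0..xp}))
                     \<and> continuous_on {0..xp} K'"
    and \<rho>_C1: "\<exists>\<rho>'. (\<forall>x\<in>{0..xp}. (\<rho> has_real_derivative \<rho>' x) (at x within {0..xp}))
                     \<and> continuous_on {0..xp} \<rho>'"
    and Z_mono: "mono_on {0..xp} Z \<or> antimono_on {0..xp} Z"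
    and ratio_lo: "exp (- pi) < Zp / Zm" and ratio_hi: "Zp / Zm < exp pi"
  shows "\<exists>Tinf Rinf :: nat \<Rightarrow> real.
           (\<forall>m. ((\<lambda>t. Tcoef p0 cm CG (tau c) r xp m t) \<longlongrightarrow> Tinf m) at_top)
         \<and> (\<forall>m. ((\<lambda>t. Rcoef p0 cm (tau c) r xp m t) \<longlongrightarrow> Rinf m) at_top)
         \<and> Tinf sums (2 * Zp / (Zm + Zp))
         \<and> Rinf sums ((Zp - Zm) / (Zm + Zp))
         \<and> 2 * Zp / (Zm + Zp) = CG / cosh (ln CG)
         \<and> (Zp - Zm) / (Zm + Zp) = tanh (ln CG)"
proof -
  have pos: "Km > 0" "\<rho>m > 0" "Kp > 0" "\<rho>p > 0"
    using K_pos \<rho>_pos left[rule_format, of "-1"] right[rule_format, of "xp + 1"] by auto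
  then have Zm_Zp: "Zm > 0" "Zp > 0"
    by (simp_all add: Zm_def Zp_def)
  have CG_eq: "CG = sqrt (Zp / Zm)"
    by (simp add: CG_def Zp_def Zm_def)
  have "sqrt (K 0 * \<rho> 0) = Zm" "sqrt (K xp * \<rho> xp) = Zp"
    unfolding Zm_def Zp_def by (rule impedance_at_endpoints[OF K_cont \<rho>_cont left right])+
  then have ln_CG: "(ln (sqrt (K xp * \<rho> xp)) - ln (sqrt (K 0 * \<rho> 0))) / 2 = ln CG"
    using Zm_Zp by (simp add: CG_eq ln_sqrt ln_div)
  have Z_pos: "sqrt (K x * \<rho> x) > 0" for x
    using K_pos \<rho>_pos by simp
  have "\<exists>Z'. (\<forall>x\<in>{0..xp}. ((\<lambda>y. sqrt (K y * \<rho> y)) has_real_derivative Z' x) (at x within {0..xp}))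
      \<and> continuous_on {0..xp} Z'"
    by (rule C1_on_sqrt_mult[OF K_C1 \<rho>_C1]) (use K_pos \<rho>_pos in \<open>auto intro: mult_pos_pos\<close>)
  then obtain s q where s: "s = 1 \<or> s = -1" and q: "continuous_on UNIV q" "\<And>z. q z \<ge> 0"
    and r_q: "\<And>x. x \<in> {0..xp} \<Longrightarrow> r x = s * q x" and q_integral: "integral {0..xp} q = s * ln CG"
    using log_derivative_sign_normalized[OF xp_pos Z_pos _ Z_mono[unfolded Z_def]]
    unfolding r_def ln_CG[symmetric] by blast
  obtain B where B: "\<And>y. y \<in> {0..xp} \<Longrightarrow> \<bar>tau c y\<bar> \<le> B"
    unfolding c_def using tau_sqrt_divide_bounded[OF K_cont \<rho>_cont K_pos \<rho>_pos] by blast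
  have "\<bar>ln CG\<bar> < pi / 2"
    unfolding CG_eq using ratio_lo ratio_hi by (rule abs_ln_sqrt_less_pi_half)
  then have "\<exists>Tinf Rinf :: nat \<Rightarrow> real.
           (\<forall>m. ((\<lambda>t. Tcoef p0 cm CG (tau c) r xp m t) \<longlongrightarrow> Tinf m) at_top)
         \<and> (\<forall>m. ((\<lambda>t. Rcoef p0 cm (tau c) r xp m t) \<longlongrightarrow> Rinf m) at_top)
         \<and> Tinf sums (CG / cosh (ln CG)) \<and> Rinf sums tanh (ln CG)"
    by (intro step_response_series[OF _ _ xp_pos _ B q s r_q q_integral])
      (use pos in \<open>simp_all add: p0_def cm_def tau_def\<close>)
  then show ?thesis
    unfolding impedance_ratio_closed_forms[OF Zm_Zp, folded CG_eq] by blast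
qed

end
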